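(* Let $n\geqslant1$, $a,b>0$, $\sigma\in(0,1)\cup(1,+\infty)$, and let $\widehat v(t,\xi)$ be the partial Fourier transform of the solution of $v_{tt}-a\Delta v+b(-\Delta)^\sigma v+v_t=0$, $v(0)=v_0$, $v_t(0)=v_1$, i.e. $\widehat v=\frac{\lambda_+e^{\lambda_-t}-\lambda_-e^{\lambda_+t}}{\lambda_+-\lambda_-}\widehat v_0+\frac{e^{\lambda_+t}-e^{\lambda_-t}}{\lambda_+-\lambda_-}\widehat v_1$ with $\lambda_\pm=\frac12\big(-1\pm\sqrt{1-4(a|\xi|^2+b|\xi|^{2\sigma})}\big)$. There exist $\varepsilon_0>0$ sufficiently small and constants $c,C>0$ such that for all $t\geqslant0$ and all $\xi$ with $|\xi|\leqslant\varepsilon_0$: if $\sigma\in(0,1)$, $$|\widehat v|\leqslant C e^{-c|\xi|^{2\sigma}t}(|\widehat v_0|+|\widehat v_1|),\quad \big|\widehat v-e^{-b|\xi|^{2\sigma}t}(\widehat v_0+\widehat v_1)\big|\leqslant C\big(e^{-ct}+|\xi|^{\min\{2-2\sigma,2\sigma\}}e^{-c|\xi|^{2\sigma}t}\big)(|\widehat v_0|+|\widehat v_1|);$$ if $\sigma\in(1,+\infty)$, $$|\widehat v|\leqslant C e^{-c|\xi|^{2}t}(|\widehat v_0|+|\widehat v_1|),\quad \big|\widehat v-e^{-a|\xi|^{2}t}(\widehat v_0+\widehat v_1)\big|\leqslant C\big(e^{-ct}+|\xi|^{\min\{2,2\sigma-2\}}e^{-c|\xi|^{2}t}\big)(|\widehat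 v_0|+|\widehat v_1|).$$
   Context: $(-\Delta)^\sigma$ is the Fourier multiplier with symbol $|\xi|^{2\sigma}$. *)

theory Defs
  imports "HOL-Analysis.Analysis"
begin

definition lam_plus :: "real \<Rightarrow> real \<Rightarrow> real \<Rightarrow> real \<Rightarrow> complex" where
  "lam_plus a b \<sigma> r = (-1 + csqrt (complex_of_real (1 - 4 * (a * r^2 + b * r powr (2*\<sigma>))))) / 2"

definition lam_minus :: "real \<Rightarrow> real \<Rightarrow> real \<Rightarrow> real \<Rightarrow> complex" where
  "lam_minus a b \<sigma> r = (-1 - csqrt (complex_of_real (1 - 4 * (a * r^2 + b * r powr (2*\<sigma>))))) / 2"

definition vhat :: "real \<Rightarrow> real \<Rightarrow> real \<Rightarrow> ('n::euclidean_space \<Rightarrow> complex) \<Rightarrow> ('n \<Rightarrow> complex)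
    \<Rightarrow> real \<Rightarrow> 'n \<Rightarrow> complex" where
  "vhat a b \<sigma> v0 v1 t \<xi> =
     (let lp = lam_plus a b \<sigma> (norm \<xi>); lm = lam_minus a b \<sigma> (norm \<xi>) in
       (lp * exp (lm * of_real t) - lm * exp (lp * of_real t)) / (lp - lm) * v0 \<xi>
     + (exp (lp * of_real t) - exp (lm * of_real t)) / (lp - lm) * v1 \<xi>)"

end

theory Submission
  imports Defs
begin

text \<open>
  For small \<open>|\<xi>|\<close> the symbol \<open>f = a |\<xi>|\<^sup>2 + b |\<xi>|\<^bsup>2\<sigma>\<^esup>\<close> is at most \<open>3/16\<close>, so the
  characteristic roots are real: \<open>\<lambda>\<^sub>- \<le> -1/2\<close> is a fast damped mode, and
  \<open>\<lambda>\<^sub>+ = -2f / (1 + sqrt (1 - 4f))\<close> lies in \<open>[-f - 4f\<^sup>2, -f]\<close>.  Both coefficients of \<open>vhat\<close>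
  have the form \<open>(1 + A) e\<^bsup>\<lambda>\<^sub>+ t\<^esup> + B e\<^bsup>\<lambda>\<^sub>- t\<^esup>\<close> with \<open>|A| \<le> 8f\<close> and \<open>|B| \<le> 2\<close>.
  Write \<open>f = \<beta> r\<^sup>p + \<alpha> r\<^sup>q\<close> with \<open>r = |\<xi>|\<close> and \<open>p < q\<close>, i.e. \<open>p = 2\<sigma>, \<beta> = b\<close> if \<open>\<sigma> < 1\<close> and
  \<open>p = 2, \<beta> = a\<close> if \<open>\<sigma> > 1\<close>.  Comparing \<open>e\<^bsup>\<lambda>\<^sub>+ t\<^esup>\<close> with \<open>e\<^bsup>-\<beta> r\<^sup>p t\<^esup>\<close> costs
  \<open>(f - \<beta> r\<^sup>p + 4f\<^sup>2) t e\<^bsup>-\<beta> r\<^sup>p t\<^esup> = O(r\<^bsup>min (q-p) p\<^esup>) r\<^sup>p t e\<^bsup>-\<beta> r\<^sup>p t\<^esup>\<close>, and the factor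
  \<open>r\<^sup>p t\<close> is absorbed by half of the decay, since \<open>x e\<^bsup>-x\<^esup> \<le> 2 e\<^bsup>-x/2\<^esup>\<close>.
\<close>

definition root_plus :: "real \<Rightarrow> real" where
  "root_plus f = (-1 + sqrt (1 - 4*f)) / 2"

definition root_minus :: "real \<Rightarrow> real" where
  "root_minus f = (-1 - sqrt (1 - 4*f)) / 2"

text \<open>The real coefficients of \<open>v0\<close> and \<open>v1\<close> in \<open>vhat\<close> when the symbol is \<open>f \<le> 1/4\<close>.\<close>

definition kernel_v0 :: "real \<Rightarrow> real \<Rightarrow> real" where
  "kernel_v0 f t = (root_plus f * exp (root_minus f * t) - root_minus f * exp (root_plus f * t))
                   / (root_plus f - root_minus f)"

definition kernel_v1 :: "real \<Rightarrow> real \<Rightarrow> real" where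
  "kernel_v1 f t = (exp (root_plus f * t) - exp (root_minus f * t)) / (root_plus f - root_minus f)"

lemma sqrt_one_minus_four_bounds:
  fixes f :: real
  assumes "0 \<le> f" "f \<le> 3/16"
  shows "1/2 \<le> sqrt (1 - 4*f)" and "sqrt (1 - 4*f) \<le> 1" and "1 - sqrt (1 - 4*f) \<le> 4*f"
proof -
  show "1/2 \<le> sqrt (1 - 4*f)"
    using assms real_le_rsqrt[of "1/2" "1 - 4*f"] by (simp add: power2_eq_square)
  show D1: "sqrt (1 - 4*f) \<le> 1" using assms by (subst real_sqrt_le_1_iff) linarith
  have "sqrt (1 - 4*f) * sqrt (1 - 4*f) \<le> sqrt (1 - 4*f) * 1"
    using D1 assms by (intro mult_left_mono) auto
  moreover have "sqrt (1 - 4*f) * sqrt (1 - 4*f) = 1 - 4*f" using assms by simp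
  ultimately show "1 - sqrt (1 - 4*f) \<le> 4*f" by linarith
qed

lemma root_plus_eq:
  assumes "f \<le> 1/4"
  shows "root_plus f = - 2*f / (1 + sqrt (1 - 4*f))"
proof -
  define D where "D = sqrt (1 - 4*f)"
  have "D * D = 1 - 4*f" unfolding D_def using assms by simp
  then have "(-1 + D) * (1 + D) = - 4*f" by (simp add: algebra_simps)
  moreover have "0 < 1 + D" unfolding D_def using assms by (simp add: add_pos_nonneg)
  ultimately show ?thesis unfolding root_plus_def D_def[symmetric] by (simp add: field_simps)
qed

lemma root_plus_bounds:
  assumes "0 \<le> f" "f \<le> 3/16"
  shows "- (f + 4*f^2) \<le> root_plus f" and "root_plus f \<le> - f"
proof -
  define D where "D = sqrt (1 - 4*f)"
  have D: "1/2 \<le> D" "D \<le> 1" "1 - D \<le> 4*f"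
    using sqrt_one_minus_four_bounds[OF assms] unfolding D_def by auto
  have eq: "root_plus f = - 2*f / (1 + D)" using root_plus_eq assms unfolding D_def by simp
  have pos: "0 < 1 + D" using D by simp
  have "f * (1 + D) \<le> f * 2" using D assms by (intro mult_left_mono) auto
  then show "root_plus f \<le> - f" unfolding eq using pos by (simp add: le_divide_eq)
  have "(f + 4*f^2) * (2 - 4*f) - 2*f = 4*f^2 * (1 - 4*f)" by (simp add: algebra_simps power2_eq_square)
  moreover have "0 \<le> 4*f^2 * (1 - 4*f)" using assms by simp
  ultimately have "2*f \<le> (f + 4*f^2) * (2 - 4*f)" by linarith
  also have "\<dots> \<le> (f + 4*f^2) * (1 + D)" using D assms by (intro mult_left_mono) auto
  finally have "2*f / (1 + D) \<le> f + 4*f^2" using pos by (simp add: divide_le_eq)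
  then show "- (f + 4*f^2) \<le> root_plus f" unfolding eq by simp
qed

lemma root_minus_le: "f \<le> 1/4 \<Longrightarrow> root_minus f \<le> - 1/2"
  using real_sqrt_ge_zero[of "1 - 4*f"] unfolding root_minus_def by simp

lemma abs_exp_diff_le:
  fixes g h l t :: real
  assumes "- h \<le> l" "l \<le> - g" "0 \<le> t"
  shows "\<bar>exp (l*t) - exp (-g*t)\<bar> \<le> (h - g) * t * exp (-g*t)"
proof -
  have split: "exp (l*t) = exp (-g*t) * exp ((l + g)*t)" by (simp add: mult_exp_exp algebra_simps)
  have "(l + g) * t \<le> 0" using assms by (simp add: mult_nonpos_nonneg)
  then have "\<bar>exp (l*t) - exp (-g*t)\<bar> = exp (-g*t) * (1 - exp ((l + g)*t))"
    unfolding split by (simp add: algebra_simps)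
  also have "\<dots> \<le> exp (-g*t) * (- ((l + g) * t))"
    using exp_ge_add_one_self[of "(l + g)*t"] by (intro mult_left_mono) (linarith, simp)
  also have "\<dots> \<le> exp (-g*t) * ((h - g) * t)"
  proof -
    have "- ((l + g) * t) \<le> (h - g) * t"
      using mult_right_mono[of "- (l + g)" "h - g" t] assms by (simp add: algebra_simps)
    then show ?thesis by (intro mult_left_mono) auto
  qed
  finally show ?thesis by (simp add: algebra_simps)
qed

lemma two_mode_bounds:
  fixes A B g h k l m t :: real
  assumes "- h \<le> l" "l \<le> - g" "m \<le> - k" "0 \<le> t"
  shows "\<bar>(1 + A) * exp (l*t) + B * exp (m*t)\<bar> \<le> (1 + \<bar>A\<bar>) * exp (-g*t) + \<bar>B\<bar> * exp (-k*t)"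
    and "\<bar>(1 + A) * exp (l*t) + B * exp (m*t) - exp (-g*t)\<bar>
           \<le> (\<bar>A\<bar> + (h - g) * t) * exp (-g*t) + \<bar>B\<bar> * exp (-k*t)"
proof -
  have "exp (l*t) \<le> exp (-g*t)" "exp (m*t) \<le> exp (-k*t)"
    using mult_right_mono[OF assms(2,4)] mult_right_mono[OF assms(3,4)] by simp_all
  then have slow: "\<bar>A * exp (l*t)\<bar> \<le> \<bar>A\<bar> * exp (-g*t)"
    and fast: "\<bar>B * exp (m*t)\<bar> \<le> \<bar>B\<bar> * exp (-k*t)"
    by (simp_all add: abs_mult mult_left_mono)
  have "\<bar>1 + A\<bar> \<le> 1 + \<bar>A\<bar>" using abs_triangle_ineq[of 1 A] by simp
  then have "\<bar>(1 + A) * exp (l*t)\<bar> \<le> (1 + \<bar>A\<bar>) * exp (-g*t)"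
    unfolding abs_mult using \<open>exp (l*t) \<le> exp (-g*t)\<close> by (intro mult_mono) auto
  then show "\<bar>(1 + A) * exp (l*t) + B * exp (m*t)\<bar> \<le> (1 + \<bar>A\<bar>) * exp (-g*t) + \<bar>B\<bar> * exp (-k*t)"
    using abs_triangle_ineq[of "(1 + A) * exp (l*t)" "B * exp (m*t)"] fast by linarith
  have "(1 + A) * exp (l*t) + B * exp (m*t) - exp (-g*t)
        = (exp (l*t) - exp (-g*t)) + A * exp (l*t) + B * exp (m*t)"
    by (simp add: algebra_simps)
  moreover have "(\<bar>A\<bar> + (h - g) * t) * exp (-g*t) = (h - g) * t * exp (-g*t) + \<bar>A\<bar> * exp (-g*t)"
    by (simp add: algebra_simps)
  ultimately show "\<bar>(1 + A) * exp (l*t) + B * exp (m*t) - exp (-g*t)\<bar>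
           \<le> (\<bar>A\<bar> + (h - g) * t) * exp (-g*t) + \<bar>B\<bar> * exp (-k*t)"
    using abs_exp_diff_le[OF assms(1,2,4)] slow fast
      abs_triangle_ineq[of "(exp (l*t) - exp (-g*t)) + A * exp (l*t)" "B * exp (m*t)"]
      abs_triangle_ineq[of "exp (l*t) - exp (-g*t)" "A * exp (l*t)"]
    by linarith
qed

lemma kernel_v_two_modes:
  assumes "0 \<le> f" "f \<le> 3/16" "K \<in> {kernel_v0 f, kernel_v1 f}"
  obtains A B where "\<And>t. K t = (1 + A) * exp (root_plus f * t) + B * exp (root_minus f * t)"
    and "\<bar>A\<bar> \<le> 8*f" and "\<bar>B\<bar> \<le> 2"
proof -
  define D where "D = sqrt (1 - 4*f)"
  have D: "1/2 \<le> D" "D \<le> 1" "1 - D \<le> 4*f"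
    using sqrt_one_minus_four_bounds[OF assms(1,2)] unfolding D_def by auto
  have roots: "root_plus f = (-1 + D) / 2" "root_minus f = (-1 - D) / 2"
    unfolding root_plus_def root_minus_def D_def by simp_all
  have "8*f * (1/2) \<le> 8*f * D" using D assms by (intro mult_left_mono) auto
  then have "1 - D \<le> 8*f * D" using D by linarith
  then have A1: "(1 - D) / D \<le> 8*f" using D by (simp add: pos_divide_le_eq)
  have A0: "0 \<le> (1 - D) / (2*D)" "(1 - D) / (2*D) \<le> (1 - D) / D" using D by (simp_all add: frac_le)
  have B0: "\<bar>D - 1\<bar> / \<bar>2*D\<bar> = (1 - D) / (2*D)" using D by simp
  have B1: "1 / D \<le> 2" using D by (simp add: divide_le_eq)
  from assms(3) consider "K = kernel_v0 f" | "K = kernel_v1 f" by blast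
  then show thesis
  proof cases
    case 1
    show thesis
    proof (rule that)
      show "K t = (1 + (1 - D) / (2*D)) * exp (root_plus f * t)
                  + (- (1 - D) / (2*D)) * exp (root_minus f * t)" for t
        using D unfolding 1 kernel_v0_def roots by (simp add: field_simps)
    qed (use A0 A1 B0 assms in auto)
  next
    case 2
    show thesis
    proof (rule that)
      show "K t = (1 + (1 - D) / D) * exp (root_plus f * t) + (- 1 / D) * exp (root_minus f * t)" for t
        using D unfolding 2 kernel_v1_def roots by (simp add: field_simps)
    qed (use A0 A1 B1 D in auto)
  qed
qed

lemma kernel_v_bounds:
  assumes "0 \<le> g" "g \<le> f" "f \<le> 3/16" "0 \<le> t" "K \<in> {kernel_v0 f, kernel_v1 f}"
  shows "\<bar>K t\<bar> \<le> 5 * exp (-g*t)"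
    and "\<bar>K t - exp (-g*t)\<bar> \<le> (8*f + (f + 4*f^2 - g) * t) * exp (-g*t) + 2 * exp (-t/2)"
proof -
  have f: "0 \<le> f" "f \<le> 3/16" using assms by linarith+
  obtain A B where K: "\<And>t. K t = (1 + A) * exp (root_plus f * t) + B * exp (root_minus f * t)"
    and A: "\<bar>A\<bar> \<le> 8*f" and B: "\<bar>B\<bar> \<le> 2"
    using kernel_v_two_modes[OF f assms(5)] by blast
  have roots: "- (f + 4*f^2) \<le> root_plus f" "root_plus f \<le> - g" "root_minus f \<le> - (1/2)"
    using root_plus_bounds[OF f] root_minus_le[of f] assms by auto
  have half: "- (1/2) * t = -t/2" by simp
  note modes = two_mode_bounds[OF roots assms(4), of A B, unfolded half]
  have slow: "exp (-t/2) \<le> exp (-g*t)"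
    using mult_right_mono[of g "1/2" t] assms by simp
  have "\<bar>B\<bar> * exp (-t/2) \<le> 2 * exp (-t/2)" using B by (intro mult_right_mono) auto
  moreover have "(1 + \<bar>A\<bar>) * exp (-g*t) \<le> 3 * exp (-g*t)" using A f by (intro mult_right_mono) auto
  ultimately show "\<bar>K t\<bar> \<le> 5 * exp (-g*t)" using modes(1) slow unfolding K by linarith
  have "(\<bar>A\<bar> + (f + 4*f^2 - g) * t) * exp (-g*t) \<le> (8*f + (f + 4*f^2 - g) * t) * exp (-g*t)"
    using A by (intro mult_right_mono) auto
  then show "\<bar>K t - exp (-g*t)\<bar> \<le> (8*f + (f + 4*f^2 - g) * t) * exp (-g*t) + 2 * exp (-t/2)"
    using modes(2) \<open>\<bar>B\<bar> * exp (-t/2) \<le> 2 * exp (-t/2)\<close> unfolding K by linarith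
qed

lemma mult_exp_neg_le:
  fixes x :: real
  assumes "0 \<le> x"
  shows "x * exp (-x) \<le> 2 * exp (-x/2)"
proof -
  have "x/2 \<le> exp (x/2)" using exp_ge_add_one_self[of "x/2"] by linarith
  then have "x/2 * exp (-x/2) \<le> 1" by (simp add: exp_minus divide_le_eq field_simps)
  then have "x/2 * exp (-x/2) * exp (-x/2) \<le> exp (-x/2)" using assms by (intro mult_left_le_one_le) auto
  moreover have "x * exp (-x) = 2 * (x/2 * exp (-x/2) * exp (-x/2))"
    by (simp add: mult.assoc flip: exp_add)
  ultimately show ?thesis by linarith
qed

lemma power_symbol_bounds:
  fixes \<alpha> \<beta> p q r :: real
  assumes "0 < \<alpha>" "0 < \<beta>" "0 < p" "p < q" "0 \<le> r" "r \<le> 1"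
  defines "f \<equiv> \<beta> * r powr p + \<alpha> * r powr q"
  shows "f \<le> (\<alpha> + \<beta>) * r powr p"
    and "f + 4*f^2 - \<beta> * r powr p \<le> (\<alpha> + 4*(\<alpha> + \<beta>)^2) * r powr (min (q-p) p) * r powr p"
proof -
  define s where "s = r powr (min (q-p) p)"
  have q: "r powr q = r powr (q-p) * r powr p" by (simp flip: powr_add)
  have "r powr (q-p) \<le> 1" using assms by (simp add: powr_le1)
  then show f: "f \<le> (\<alpha> + \<beta>) * r powr p"
    unfolding f_def q using assms mult_right_mono[of "r powr (q-p)" 1 "\<alpha> * r powr p"]
    by (simp add: algebra_simps)
  have small: "r powr (q-p) \<le> s" "r powr p \<le> s"
    unfolding s_def using assms by (simp_all add: powr_mono')
  have "f^2 \<le> ((\<alpha> + \<beta>) * r powr p)^2"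
    using f assms unfolding f_def by (intro power_mono) auto
  also have "\<dots> = (\<alpha> + \<beta>)^2 * (r powr p * r powr p)" by (simp add: power2_eq_square)
  also have "\<dots> \<le> (\<alpha> + \<beta>)^2 * (s * r powr p)"
    using small by (intro mult_left_mono mult_right_mono) auto
  finally have "4*f^2 \<le> 4*(\<alpha> + \<beta>)^2 * s * r powr p" by (simp add: algebra_simps)
  moreover have "\<alpha> * r powr q \<le> \<alpha> * s * r powr p"
    unfolding q using small assms by (simp add: mult_right_mono)
  ultimately show "f + 4*f^2 - \<beta> * r powr p \<le> (\<alpha> + 4*(\<alpha> + \<beta>)^2) * r powr (min (q-p) p) * r powr p"
    unfolding f_def s_def[symmetric] by (simp add: algebra_simps)
qed

lemma kernel_v_power_symbol_bounds:
  fixes \<alpha> \<beta> p q r t :: real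
  assumes "0 < \<alpha>" "0 < \<beta>" "0 < p" "p < q" "0 \<le> r" "r \<le> 1" "0 \<le> t"
    and "(\<alpha> + \<beta>) * r powr p \<le> 3/16"
    and "K \<in> {kernel_v0 (\<beta> * r powr p + \<alpha> * r powr q), kernel_v1 (\<beta> * r powr p + \<alpha> * r powr q)}"
  shows "\<bar>K t\<bar> \<le> 5 * exp (-\<beta> * r powr p * t)"
    and "\<bar>K t - exp (-\<beta> * r powr p * t)\<bar> \<le> 2 * exp (-t/2)
           + (8*(\<alpha> + \<beta>) + 2*(\<alpha> + 4*(\<alpha> + \<beta>)^2)/\<beta>) * r powr (min (q-p) p) * exp (-\<beta>/2 * r powr p * t)"
proof -
  define \<rho> s g f where "\<rho> = r powr p" and "s = r powr (min (q-p) p)"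
    and "g = \<beta> * r powr p" and "f = \<beta> * r powr p + \<alpha> * r powr q"
  have fg: "f \<le> (\<alpha> + \<beta>) * \<rho>" "f + 4*f^2 - g \<le> (\<alpha> + 4*(\<alpha> + \<beta>)^2) * s * \<rho>"
    using power_symbol_bounds[OF assms(1-6)] unfolding \<rho>_def s_def g_def f_def by auto
  have \<rho>: "0 \<le> \<rho>" "\<rho> \<le> s" unfolding \<rho>_def s_def using assms by (simp_all add: powr_mono')
  have g: "0 \<le> g" "g \<le> f" "g = \<beta> * \<rho>" unfolding g_def f_def \<rho>_def using assms by auto
  have "f \<le> 3/16" using fg(1) assms(8) unfolding \<rho>_def by linarith
  note kernel = kernel_v_bounds[OF g(1,2) this assms(7) assms(9)[folded f_def]]
  have exps: "exp (-\<beta> * r powr p * t) = exp (-g*t)" "exp (-\<beta>/2 * r powr p * t) = exp (-(g*t)/2)"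
    unfolding g_def by (simp_all add: algebra_simps)
  show "\<bar>K t\<bar> \<le> 5 * exp (-\<beta> * r powr p * t)" using kernel(1) unfolding exps .
  have gt: "0 \<le> g*t" using g assms by simp
  have decay: "exp (-g*t) \<le> exp (-(g*t)/2)" using gt by simp
  have f_le: "8*f \<le> 8*(\<alpha> + \<beta>) * s"
    using fg(1) mult_left_mono[OF \<rho>(2), of "\<alpha> + \<beta>"] assms by linarith
  have "8*f * exp (-g*t) \<le> 8*(\<alpha> + \<beta>) * s * exp (-(g*t)/2)"
    using mult_mono[OF f_le decay] \<rho> assms by simp
  moreover have "(f + 4*f^2 - g) * t * exp (-g*t) \<le> 2*(\<alpha> + 4*(\<alpha> + \<beta>)^2)/\<beta> * s * exp (-(g*t)/2)"
  proof -
    have "(f + 4*f^2 - g) * t * exp (-g*t) \<le> (\<alpha> + 4*(\<alpha> + \<beta>)^2) * s * \<rho> * t * exp (-g*t)"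
      using fg(2) assms by (intro mult_right_mono) auto
    also have "\<dots> = (\<alpha> + 4*(\<alpha> + \<beta>)^2) / \<beta> * s * (g*t * exp (-(g*t)))"
      using g assms by (simp add: field_simps)
    also have "\<dots> \<le> (\<alpha> + 4*(\<alpha> + \<beta>)^2) / \<beta> * s * (2 * exp (-(g*t)/2))"
      using mult_exp_neg_le[OF gt] \<rho> assms by (intro mult_left_mono) auto
    finally show ?thesis by (simp add: algebra_simps)
  qed
  ultimately show "\<bar>K t - exp (-\<beta> * r powr p * t)\<bar> \<le> 2 * exp (-t/2)
           + (8*(\<alpha> + \<beta>) + 2*(\<alpha> + 4*(\<alpha> + \<beta>)^2)/\<beta>) * r powr (min (q-p) p) * exp (-\<beta>/2 * r powr p * t)"
    using kernel(2) unfolding exps s_def[symmetric] by (simp add: algebra_simps)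
qed

lemma powr_le_of_le_root:
  fixes r x p :: real
  assumes "0 \<le> r" "r \<le> x powr (1/p)" "0 < p" "0 < x"
  shows "r powr p \<le> x"
proof -
  have "r powr p \<le> (x powr (1/p)) powr p" using assms by (intro powr_mono2) auto
  also have "\<dots> = x" using assms by (simp add: powr_powr)
  finally show ?thesis .
qed

lemma kernel_v_low_frequency:
  fixes \<alpha> \<beta> p q :: real
  assumes "0 < \<alpha>" "0 < \<beta>" "0 < p" "p < q"
  obtains \<epsilon> c C where "0 < \<epsilon>" "0 < c" "0 < C"
    and "\<And>r. 0 \<le> r \<Longrightarrow> r \<le> \<epsilon> \<Longrightarrow> \<beta> * r powr p + \<alpha> * r powr q \<le> 3/16"
    and "\<And>K r t. 0 \<le> r \<Longrightarrow> r \<le> \<epsilon> \<Longrightarrow> 0 \<le> t \<Longrightarrow>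
           K \<in> {kernel_v0 (\<beta> * r powr p + \<alpha> * r powr q), kernel_v1 (\<beta> * r powr p + \<alpha> * r powr q)} \<Longrightarrow>
           \<bar>K t\<bar> \<le> C * exp (-c * r powr p * t)"
    and "\<And>K r t. 0 \<le> r \<Longrightarrow> r \<le> \<epsilon> \<Longrightarrow> 0 \<le> t \<Longrightarrow>
           K \<in> {kernel_v0 (\<beta> * r powr p + \<alpha> * r powr q), kernel_v1 (\<beta> * r powr p + \<alpha> * r powr q)} \<Longrightarrow>
           \<bar>K t - exp (-\<beta> * r powr p * t)\<bar>
             \<le> C * (exp (-c*t) + r powr (min (q-p) p) * exp (-c * r powr p * t))"
proof -
  define M where "M = 8*(\<alpha> + \<beta>) + 2*(\<alpha> + 4*(\<alpha> + \<beta>)^2)/\<beta>"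
  define \<epsilon> where "\<epsilon> = min 1 ((3 / (16*(\<alpha> + \<beta>))) powr (1/p))"
  define c where "c = min (\<beta>/2) (1/2)"
  have M: "0 \<le> M" unfolding M_def using assms by simp
  have small: "(\<alpha> + \<beta>) * r powr p \<le> 3/16" if "0 \<le> r" "r \<le> \<epsilon>" for r
    using powr_le_of_le_root[of r "3 / (16*(\<alpha> + \<beta>))" p] that assms
    unfolding \<epsilon>_def by (simp add: field_simps)
  show thesis
  proof (rule that)
    show "0 < \<epsilon>" "0 < c" "0 < 5 + M" unfolding \<epsilon>_def c_def using assms M by auto
    fix r t :: real and K
    assume r: "0 \<le> r" "r \<le> \<epsilon>"
    have r1: "r \<le> 1" using r unfolding \<epsilon>_def by simp
    have "\<beta> * r powr p + \<alpha> * r powr q \<le> (\<alpha> + \<beta>) * r powr p"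
      using power_symbol_bounds(1)[OF assms r(1) r1] .
    then show "\<beta> * r powr p + \<alpha> * r powr q \<le> 3/16" using small[OF r] by linarith
    assume t: "0 \<le> t"
    assume K: "K \<in> {kernel_v0 (\<beta> * r powr p + \<alpha> * r powr q), kernel_v1 (\<beta> * r powr p + \<alpha> * r powr q)}"
    note bounds = kernel_v_power_symbol_bounds[OF assms r(1) r1 t small[OF r] K, folded M_def]
    have c: "c \<le> \<beta>/2" "\<beta>/2 \<le> \<beta>" "c \<le> 1/2" unfolding c_def using assms by auto
    have rpt: "0 \<le> r powr p * t" using t by simp
    have decay: "exp (-\<beta> * r powr p * t) \<le> exp (-c * r powr p * t)"
      "exp (-\<beta>/2 * r powr p * t) \<le> exp (-c * r powr p * t)" "exp (-t/2) \<le> exp (-c*t)"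
      using mult_right_mono[OF order_trans[OF c(1,2)] rpt] mult_right_mono[OF c(1) rpt]
        mult_right_mono[OF c(3) t] by (simp_all add: algebra_simps)
    have "5 * exp (-\<beta> * r powr p * t) \<le> (5 + M) * exp (-c * r powr p * t)"
      using decay(1) M by (intro mult_mono) auto
    then show "\<bar>K t\<bar> \<le> (5 + M) * exp (-c * r powr p * t)"
      using bounds(1) by linarith
    have "2 * exp (-t/2) \<le> (5 + M) * exp (-c*t)"
      using decay(3) M by (intro mult_mono) auto
    moreover have "M * r powr (min (q-p) p) * exp (-\<beta>/2 * r powr p * t)
                     \<le> (5 + M) * (r powr (min (q-p) p) * exp (-c * r powr p * t))"
      unfolding mult.assoc using decay(2) M by (intro mult_mono) auto
    ultimately show "\<bar>K t - exp (-\<beta> * r powr p * t)\<bar>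
            \<le> (5 + M) * (exp (-c*t) + r powr (min (q-p) p) * exp (-c * r powr p * t))"
      using bounds(2) unfolding distrib_left by linarith
  qed
qed

lemma vhat_eq_kernels:
  fixes a b \<sigma> :: real and \<xi> :: "'n::euclidean_space"
  defines "f \<equiv> a * (norm \<xi>)^2 + b * norm \<xi> powr (2*\<sigma>)"
  assumes "f \<le> 1/4"
  shows "vhat a b \<sigma> v0 v1 t \<xi> = of_real (kernel_v0 f t) * v0 \<xi> + of_real (kernel_v1 f t) * v1 \<xi>"
proof -
  have "csqrt (of_real (1 - 4*f)) = of_real (sqrt (1 - 4*f))" using assms by (intro csqrt_of_real) simp
  then have "lam_plus a b \<sigma> (norm \<xi>) = of_real (root_plus f)"
    and "lam_minus a b \<sigma> (norm \<xi>) = of_real (root_minus f)"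
    unfolding lam_plus_def lam_minus_def root_plus_def root_minus_def f_def by simp_all
  then show ?thesis unfolding vhat_def kernel_v0_def kernel_v1_def Let_def by (simp flip: exp_of_real)
qed

lemma norm_of_real_lincomb_le:
  fixes x y :: "'a::real_normed_div_algebra"
  assumes "\<bar>A\<bar> \<le> M" "\<bar>B\<bar> \<le> M"
  shows "norm (of_real A * x + of_real B * y) \<le> M * (norm x + norm y)"
proof -
  have "norm (of_real A * x + of_real B * y) \<le> \<bar>A\<bar> * norm x + \<bar>B\<bar> * norm y"
    using norm_triangle_ineq[of "of_real A * x" "of_real B * y"] by (simp add: norm_mult)
  also have "\<dots> \<le> M * norm x + M * norm y" using assms by (intro add_mono mult_right_mono) auto
  finally show ?thesis by (simp add: distrib_left)
qed

lemma vhat_low_frequency: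
  fixes a b \<sigma> \<alpha> \<beta> p q :: real
  assumes "0 < \<alpha>" "0 < \<beta>" "0 < p" "p < q"
    and symbol: "\<And>r. 0 \<le> r \<Longrightarrow> a * r^2 + b * r powr (2*\<sigma>) = \<beta> * r powr p + \<alpha> * r powr q"
  shows "\<exists>\<epsilon>>0. \<exists>c>0. \<exists>C>0. \<forall>(v0 :: 'n::euclidean_space \<Rightarrow> complex) v1 t \<xi>. 0 \<le> t \<and> norm \<xi> \<le> \<epsilon> \<longrightarrow>
           cmod (vhat a b \<sigma> v0 v1 t \<xi>) \<le> C * exp (-c * norm \<xi> powr p * t) * (cmod (v0 \<xi>) + cmod (v1 \<xi>))
         \<and> cmod (vhat a b \<sigma> v0 v1 t \<xi> - of_real (exp (-\<beta> * norm \<xi> powr p * t)) * (v0 \<xi> + v1 \<xi>))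
             \<le> C * (exp (-c*t) + norm \<xi> powr (min (q-p) p) * exp (-c * norm \<xi> powr p * t))
                 * (cmod (v0 \<xi>) + cmod (v1 \<xi>))"
proof -
  obtain \<epsilon> c C where pos: "0 < \<epsilon>" "0 < c" "0 < C"
    and small: "\<And>r. 0 \<le> r \<Longrightarrow> r \<le> \<epsilon> \<Longrightarrow> \<beta> * r powr p + \<alpha> * r powr q \<le> 3/16"
    and size: "\<And>K r t. 0 \<le> r \<Longrightarrow> r \<le> \<epsilon> \<Longrightarrow> 0 \<le> t \<Longrightarrow>
           K \<in> {kernel_v0 (\<beta> * r powr p + \<alpha> * r powr q), kernel_v1 (\<beta> * r powr p + \<alpha> * r powr q)} \<Longrightarrow>
           \<bar>K t\<bar> \<le> C * exp (-c * r powr p * t)"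
    and deviation: "\<And>K r t. 0 \<le> r \<Longrightarrow> r \<le> \<epsilon> \<Longrightarrow> 0 \<le> t \<Longrightarrow>
           K \<in> {kernel_v0 (\<beta> * r powr p + \<alpha> * r powr q), kernel_v1 (\<beta> * r powr p + \<alpha> * r powr q)} \<Longrightarrow>
           \<bar>K t - exp (-\<beta> * r powr p * t)\<bar>
             \<le> C * (exp (-c*t) + r powr (min (q-p) p) * exp (-c * r powr p * t))"
    using kernel_v_low_frequency[OF assms(1-4)] by blast
  have "cmod (vhat a b \<sigma> v0 v1 t \<xi>) \<le> C * exp (-c * norm \<xi> powr p * t) * (cmod (v0 \<xi>) + cmod (v1 \<xi>))
      \<and> cmod (vhat a b \<sigma> v0 v1 t \<xi> - of_real (exp (-\<beta> * norm \<xi> powr p * t)) * (v0 \<xi> + v1 \<xi>))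
          \<le> C * (exp (-c*t) + norm \<xi> powr (min (q-p) p) * exp (-c * norm \<xi> powr p * t))
              * (cmod (v0 \<xi>) + cmod (v1 \<xi>))"
    if t: "0 \<le> t" and \<xi>: "norm \<xi> \<le> \<epsilon>" for v0 v1 :: "'n \<Rightarrow> complex" and t and \<xi> :: 'n
  proof
    define f where "f = \<beta> * norm \<xi> powr p + \<alpha> * norm \<xi> powr q"
    have "a * (norm \<xi>)^2 + b * norm \<xi> powr (2*\<sigma>) = f" unfolding f_def by (simp add: symbol)
    moreover have "f \<le> 1/4" using small[OF norm_ge_zero \<xi>] unfolding f_def by simp
    ultimately have v: "vhat a b \<sigma> v0 v1 t \<xi> = of_real (kernel_v0 f t) * v0 \<xi> + of_real (kernel_v1 f t) * v1 \<xi>"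
      using vhat_eq_kernels by metis
    show "cmod (vhat a b \<sigma> v0 v1 t \<xi>) \<le> C * exp (-c * norm \<xi> powr p * t) * (cmod (v0 \<xi>) + cmod (v1 \<xi>))"
      unfolding v using size[OF norm_ge_zero \<xi> t] unfolding f_def by (intro norm_of_real_lincomb_le) auto
    have shifted: "vhat a b \<sigma> v0 v1 t \<xi> - of_real (exp (-\<beta> * norm \<xi> powr p * t)) * (v0 \<xi> + v1 \<xi>)
        = of_real (kernel_v0 f t - exp (-\<beta> * norm \<xi> powr p * t)) * v0 \<xi>
          + of_real (kernel_v1 f t - exp (-\<beta> * norm \<xi> powr p * t)) * v1 \<xi>"
      unfolding v by (simp add: algebra_simps)
    show "cmod (vhat a b \<sigma> v0 v1 t \<xi> - of_real (exp (-\<beta> * norm \<xi> powr p * t)) * (v0 \<xi> + v1 \<xi>))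
          \<le> C * (exp (-c*t) + norm \<xi> powr (min (q-p) p) * exp (-c * norm \<xi> powr p * t))
              * (cmod (v0 \<xi>) + cmod (v1 \<xi>))"
      unfolding shifted using deviation[OF norm_ge_zero \<xi> t] unfolding f_def
      by (intro norm_of_real_lincomb_le) auto
  qed
  then show ?thesis using pos by blast
qed

theorem proposition3p1:
  fixes a b \<sigma> :: real
  assumes "a > 0" and "b > 0" and "\<sigma> > 0" and "\<sigma> \<noteq> 1"
  shows "\<exists>\<epsilon>0>0. \<exists>c>0. \<exists>C>0. \<forall>(v0 :: real^'n \<Rightarrow> complex) v1 t \<xi>.
     t \<ge> 0 \<and> norm \<xi> \<le> \<epsilon>0 \<longrightarrow>
     (\<sigma> < 1 \<longrightarrow>
        cmod (vhat a b \<sigma> v0 v1 t \<xi>)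
          \<le> C * exp (- c * norm \<xi> powr (2*\<sigma>) * t) * (cmod (v0 \<xi>) + cmod (v1 \<xi>))
      \<and> cmod (vhat a b \<sigma> v0 v1 t \<xi> - complex_of_real (exp (- b * norm \<xi> powr (2*\<sigma>) * t)) * (v0 \<xi> + v1 \<xi>))
          \<le> C * (exp (- c * t) + norm \<xi> powr (min (2 - 2*\<sigma>) (2*\<sigma>)) * exp (- c * norm \<xi> powr (2*\<sigma>) * t))
              * (cmod (v0 \<xi>) + cmod (v1 \<xi>))) \<and>
     (\<sigma> > 1 \<longrightarrow>
        cmod (vhat a b \<sigma> v0 v1 t \<xi>)
          \<le> C * exp (- c * (norm \<xi>)^2 * t) * (cmod (v0 \<xi>) + cmod (v1 \<xi>))
      \<and> cmod (vhat a b \<sigma> v0 v1 t \<xi> - complex_of_real (exp (- a * (norm \<xi>)^2 * t)) * (v0 \<xi> + v1 \<xi>))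
          \<le> C * (exp (- c * t) + norm \<xi> powr (min 2 (2*\<sigma> - 2)) * exp (- c * (norm \<xi>)^2 * t))
              * (cmod (v0 \<xi>) + cmod (v1 \<xi>)))"
proof (cases "\<sigma> < 1")
  case True
  have "\<And>r. 0 \<le> r \<Longrightarrow> a * r^2 + b * r powr (2*\<sigma>) = b * r powr (2*\<sigma>) + a * r powr 2" by simp
  from vhat_low_frequency[OF assms(1,2) _ _ this, where 'n = "real^'n"]
  show ?thesis using assms True by auto
next
  case False
  then have "1 < \<sigma>" using assms by simp
  have "\<And>r. 0 \<le> r \<Longrightarrow> a * r^2 + b * r powr (2*\<sigma>) = a * r powr 2 + b * r powr (2*\<sigma>)" by simp
  from vhat_low_frequency[OF assms(2,1) _ _ this, where 'n = "real^'n"]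
  show ?thesis using \<open>1 < \<sigma>\<close> by (auto simp: min.commute)
qed

end
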